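(* In an operational probabilistic theory satisfying Classical Decomposability and Strong Symmetry, let $\chi$ be an invariant state of a system $\mathrm{A}$ of capacity $d$. Then for every maximal set $\{\psi_1,\dots,\psi_d\}$ of perfectly distinguishable normalized pure states of $\mathrm{A}$, $\chi=\frac1d\sum_{i=1}^d\psi_i$.
   Context: Standing assumptions: finite-dimensional transformation spaces, convex closed sets of transformations. A transformation $\mathcal{T}$ is pure if whenever $\mathcal{T}=\sum_{j\in J_*}\mathcal{S}_j$ for a subset $J_*$ of outcomes of a test $(\mathcal{S}_j)$, then $\mathcal{S}_j=p_j\mathcal{T}$ for a probability distribution $(p_j)$. Pure states $\psi_1,\dots,\psi_k$ are perfectly distinguishable if some measurement (test with trivial output) $(e_j)_{j=1}^k$ satisfies $e_j(\psi_i)=\delta_{ij}$; the capacity $d$ of $\mathrm{A}$ is the largest such $k$, and such a set of size $d$ is maximal. Classical Decomposability: every $\rho\in\mathsf{St}_1(\mathrm{A})$ equals $\sum_{i=1}^dp_i\psi_i$ for some maximal set of perfectly distinguishable pure states and probability distribution $(p_i)$. Strong Symmetry: for any two sets $\{\psi_i\}_{i=1}^n,\{\psi'_i\}_{i=1}^n$ of perfectly distinguishable pure states there is a reversible $\mathcal{T}$ with $\mathcal{T}\psi_i=\psi'_i$ for all $i$. Invariant state: $\chi\in\mathsf{St}_1(\mathrm{A})$ with $\mathcal{U}\chi=\chi$ for all reversible $\mathcal{U}$. *)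

theory Defs
  imports "HOL-Analysis.Analysis"
begin

text \<open>
Model of a single system A of an operational probabilistic theory (OPT).
The real span of the states of A is a finite-dimensional real vector space,
the type 'v (class euclidean_space).
  St    : all states of A (subnormalised), St1 : normalised states of A,
  Prep  : preparation tests of A (tests from the trivial system to A), each a
          finite family of states indexed by its outcomes 0..<length,
  Meas  : measurements of A (tests with trivial output), each a finite family
          of effects indexed by outcomes 0..<length, effects being linear
          functionals,
  Tr    : transformations from A to A, acting as linear maps.
\<close>

definition opt_system ::
  "'v::euclidean_space set \<Rightarrow> 'v set \<Rightarrow> 'v list set \<Rightarrow> ('v \<Rightarrow> real) list set
   \<Rightarrow> ('v \<Rightarrow> 'v) set \<Rightarrow> bool" where
  "opt_system St St1 Prep Meas Tr \<longleftrightarrow>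
     St1 \<subseteq> St \<and> convex St \<and> closed St \<and> convex St1 \<and> closed St1 \<and>
     (\<forall>t\<in>Prep. set t \<subseteq> St) \<and>
     (\<forall>t\<in>Prep. \<forall>\<sigma>. \<sigma> permutes {..<length t} \<longrightarrow> map (\<lambda>j. t ! \<sigma> j) [0..<length t] \<in> Prep) \<and>
     (\<forall>m\<in>Meas. \<forall>e\<in>set m. linear e) \<and>
     (\<forall>m\<in>Meas. \<forall>\<sigma>. \<sigma> permutes {..<length m} \<longrightarrow> map (\<lambda>j. m ! \<sigma> j) [0..<length m] \<in> Meas) \<and>
     (\<forall>T\<in>Tr. linear T \<and> T ` St \<subseteq> St)"

definition pure_state :: "'v::real_vector set \<Rightarrow> 'v list set \<Rightarrow> 'v \<Rightarrow> bool" where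
  "pure_state St Prep \<psi> \<longleftrightarrow> \<psi> \<in> St \<and>
     (\<forall>t\<in>Prep. \<forall>J. J \<subseteq> {..<length t} \<longrightarrow> \<psi> = (\<Sum>j\<in>J. t ! j) \<longrightarrow>
        (\<exists>p::nat \<Rightarrow> real. (\<forall>j\<in>J. 0 \<le> p j) \<and> (\<Sum>j\<in>J. p j) = 1 \<and>
             (\<forall>j\<in>J. t ! j = p j *\<^sub>R \<psi>)))"

definition perf_dist ::
  "'v::real_vector set \<Rightarrow> 'v list set \<Rightarrow> ('v \<Rightarrow> real) list set \<Rightarrow> 'v list \<Rightarrow> bool" where
  "perf_dist St Prep Meas \<psi>s \<longleftrightarrow>
     (\<forall>i<length \<psi>s. pure_state St Prep (\<psi>s ! i)) \<and>
     (\<exists>m\<in>Meas. length m = length \<psi>s \<and>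
        (\<forall>i<length \<psi>s. \<forall>j<length \<psi>s. (m ! j) (\<psi>s ! i) = (if i = j then 1 else 0)))"

definition has_capacity ::
  "'v::real_vector set \<Rightarrow> 'v list set \<Rightarrow> ('v \<Rightarrow> real) list set \<Rightarrow> nat \<Rightarrow> bool" where
  "has_capacity St Prep Meas d \<longleftrightarrow>
     (\<exists>\<psi>s. length \<psi>s = d \<and> perf_dist St Prep Meas \<psi>s) \<and>
     (\<forall>\<psi>s. perf_dist St Prep Meas \<psi>s \<longrightarrow> length \<psi>s \<le> d)"

definition reversible :: "('v \<Rightarrow> 'v) set \<Rightarrow> ('v \<Rightarrow> 'v) \<Rightarrow> bool" where
  "reversible Tr U \<longleftrightarrow> U \<in> Tr \<and> (\<exists>V\<in>Tr. V \<circ> U = id \<and> U \<circ> V = id)"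

definition classical_decomposability ::
  "'v::real_vector set \<Rightarrow> 'v set \<Rightarrow> 'v list set \<Rightarrow> ('v \<Rightarrow> real) list set \<Rightarrow> nat \<Rightarrow> bool" where
  "classical_decomposability St St1 Prep Meas d \<longleftrightarrow>
     (\<forall>\<rho>\<in>St1. \<exists>\<psi>s (p::nat \<Rightarrow> real). length \<psi>s = d \<and> perf_dist St Prep Meas \<psi>s \<and>
        (\<forall>i<d. 0 \<le> p i) \<and> (\<Sum>i<d. p i) = 1 \<and> \<rho> = (\<Sum>i<d. p i *\<^sub>R (\<psi>s ! i)))"

definition strong_symmetry ::
  "'v::real_vector set \<Rightarrow> 'v list set \<Rightarrow> ('v \<Rightarrow> real) list set \<Rightarrow> ('v \<Rightarrow> 'v) set \<Rightarrow> bool" where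
  "strong_symmetry St Prep Meas Tr \<longleftrightarrow>
     (\<forall>\<psi>s \<psi>s'. length \<psi>s = length \<psi>s' \<longrightarrow> perf_dist St Prep Meas \<psi>s \<longrightarrow>
        perf_dist St Prep Meas \<psi>s' \<longrightarrow>
        (\<exists>U. reversible Tr U \<and> (\<forall>i<length \<psi>s. U (\<psi>s ! i) = \<psi>s' ! i)))"

definition invariant_state :: "'v set \<Rightarrow> ('v \<Rightarrow> 'v) set \<Rightarrow> 'v \<Rightarrow> bool" where
  "invariant_state St1 Tr chi \<longleftrightarrow> chi \<in> St1 \<and> (\<forall>U. reversible Tr U \<longrightarrow> U chi = chi)"

end

theory Submission
  imports Defs
begin

text \<open>
An invariant state decomposes as chi = (\<Sum>i. p i \<phi>i) over some maximal perfectly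
distinguishable set \<phi>. By Strong Symmetry every permutation \<sigma> of the \<phi>i is realised
by a reversible transformation; it fixes chi, so (\<Sum>i. p (\<sigma> i) \<phi>i) = (\<Sum>i. p i \<phi>i),
and the distinguishing effects read off p (\<sigma> i) = p i. Hence p is uniform and
chi = (1/d) (\<Sum>i. \<phi>i). A reversible transformation sending \<phi> to an arbitrary maximal
set \<psi> again fixes chi, which gives chi = (1/d) (\<Sum>i. \<psi>i).
\<close>

lemma reversible_imp_linear:
  assumes "opt_system St St1 Prep Meas Tr" and "reversible Tr U"
  shows "linear U"
  using assms unfolding opt_system_def reversible_def by blast

lemma strong_symmetryE:
  assumes "strong_symmetry St Prep Meas Tr" and "length \<phi>s = length \<psi>s"
    and "perf_dist St Prep Meas \<phi>s" and "perf_dist St Prep Meas \<psi>s"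
  obtains U where "reversible Tr U" and "\<And>i. i < length \<phi>s \<Longrightarrow> U (\<phi>s ! i) = \<psi>s ! i"
  using assms unfolding strong_symmetry_def by blast

lemma linear_image_combination:
  assumes "linear U" and "\<And>i. i < n \<Longrightarrow> U (a ! i) = b ! i"
  shows "U (\<Sum>i<n. c i *\<^sub>R a ! i) = (\<Sum>i<n. c i *\<^sub>R b ! i)"
  using assms by (simp add: linear_sum linear_scale)

lemma perf_dist_permute:
  assumes os: "opt_system St St1 Prep Meas Tr"
    and pd: "perf_dist St Prep Meas xs" and \<sigma>: "\<sigma> permutes {..<length xs}"
  shows "perf_dist St Prep Meas (map (\<lambda>i. xs ! \<sigma> i) [0..<length xs])"
proof -
  have \<sigma>_less: "\<sigma> i < length xs" if "i < length xs" for i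
    using permutes_in_image[OF \<sigma>] that by simp
  have \<sigma>_eq_iff: "\<sigma> i = \<sigma> j \<longleftrightarrow> i = j" for i j
    using permutes_inj[OF \<sigma>] by (auto dest: injD)
  obtain m where m: "m \<in> Meas" "length m = length xs"
    and m_dist: "\<And>i j. i < length xs \<Longrightarrow> j < length xs \<Longrightarrow> (m ! j) (xs ! i) = (if i = j then 1 else 0)"
    using pd unfolding perf_dist_def by blast
  let ?m' = "map (\<lambda>j. m ! \<sigma> j) [0..<length m]"
  have "?m' \<in> Meas"
    using os m \<sigma> unfolding opt_system_def by metis
  moreover have "(?m' ! j) (xs ! \<sigma> i) = (if i = j then 1 else 0)"
    if "i < length xs" "j < length xs" for i j
    using that m(2) m_dist[OF \<sigma>_less \<sigma>_less] by (simp add: \<sigma>_eq_iff)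
  ultimately show ?thesis
    using pd m(2) \<sigma>_less unfolding perf_dist_def by (intro conjI bexI[of _ ?m']) auto
qed

lemma perf_dist_coeffs_unique:
  assumes os: "opt_system St St1 Prep Meas Tr" and pd: "perf_dist St Prep Meas xs"
    and eq: "(\<Sum>i<length xs. c i *\<^sub>R xs ! i) = (\<Sum>i<length xs. c' i *\<^sub>R xs ! i)"
    and j: "j < length xs"
  shows "c j = c' j"
proof -
  obtain m where m: "m \<in> Meas" "length m = length xs"
    and m_dist: "\<And>i j. i < length xs \<Longrightarrow> j < length xs \<Longrightarrow> (m ! j) (xs ! i) = (if i = j then 1 else 0)"
    using pd unfolding perf_dist_def by blast
  have lin: "linear (m ! j)"
    using os m j unfolding opt_system_def by auto
  have read_off: "(m ! j) (\<Sum>i<length xs. a i *\<^sub>R xs ! i) = a j" for a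
  proof -
    have "(m ! j) (\<Sum>i<length xs. a i *\<^sub>R xs ! i) = (\<Sum>i<length xs. a i * (m ! j) (xs ! i))"
      by (simp add: linear_sum[OF lin] linear_scale[OF lin])
    also have "\<dots> = (\<Sum>i<length xs. if i = j then a i else 0)"
      using m_dist j by (intro sum.cong) auto
    finally show ?thesis
      using j by simp
  qed
  show ?thesis
    using read_off[of c] read_off[of c'] eq by simp
qed

lemma invariant_state_weights_permute:
  assumes os: "opt_system St St1 Prep Meas Tr" and ss: "strong_symmetry St Prep Meas Tr"
    and inv: "invariant_state St1 Tr chi" and pd: "perf_dist St Prep Meas \<phi>s"
    and chi: "chi = (\<Sum>i<length \<phi>s. p i *\<^sub>R \<phi>s ! i)"
    and \<sigma>: "\<sigma> permutes {..<length \<phi>s}" and i: "i < length \<phi>s"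
  shows "p (\<sigma> i) = p i"
proof -
  let ?\<phi>\<sigma> = "map (\<lambda>i. \<phi>s ! \<sigma> i) [0..<length \<phi>s]"
  obtain U where U: "reversible Tr U" and U_\<phi>\<sigma>: "\<And>i. i < length \<phi>s \<Longrightarrow> U (?\<phi>\<sigma> ! i) = \<phi>s ! i"
    using strong_symmetryE[OF ss _ perf_dist_permute[OF os pd \<sigma>] pd] by auto
  have "chi = (\<Sum>i<length \<phi>s. p (\<sigma> i) *\<^sub>R \<phi>s ! \<sigma> i)"
    unfolding chi using sum.permute[OF \<sigma>, of "\<lambda>i. p i *\<^sub>R \<phi>s ! i"] by simp
  also have "\<dots> = (\<Sum>i<length \<phi>s. p (\<sigma> i) *\<^sub>R ?\<phi>\<sigma> ! i)"
    by (intro sum.cong) auto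
  finally have "U chi = (\<Sum>i<length \<phi>s. p (\<sigma> i) *\<^sub>R \<phi>s ! i)"
    using linear_image_combination[OF reversible_imp_linear[OF os U] U_\<phi>\<sigma>] by simp
  moreover have "U chi = chi"
    using inv U unfolding invariant_state_def by blast
  ultimately show ?thesis
    using perf_dist_coeffs_unique[OF os pd _ i] chi by metis
qed

lemma invariant_state_weights_uniform:
  assumes os: "opt_system St St1 Prep Meas Tr" and ss: "strong_symmetry St Prep Meas Tr"
    and inv: "invariant_state St1 Tr chi" and pd: "perf_dist St Prep Meas \<phi>s"
    and chi: "chi = (\<Sum>i<length \<phi>s. p i *\<^sub>R \<phi>s ! i)"
    and p_sum: "(\<Sum>i<length \<phi>s. p i) = 1" and i: "i < length \<phi>s"
  shows "p i = 1 / real (length \<phi>s)"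
proof -
  have p_eq_p0: "p k = p 0" if "k < length \<phi>s" for k
    using invariant_state_weights_permute[OF os ss inv pd chi permutes_swap_id, of 0 k k] that
    by (cases \<phi>s) auto
  have "1 = (\<Sum>k<length \<phi>s. p 0)"
    using p_sum p_eq_p0 by simp
  moreover have "length \<phi>s > 0"
    using i by linarith
  ultimately have "p 0 = 1 / real (length \<phi>s)"
    by (simp add: field_simps)
  then show ?thesis
    using p_eq_p0[OF i] by simp
qed

lemma invariant_state_eq_uniform_mixture:
  assumes os: "opt_system St St1 Prep Meas Tr" and ss: "strong_symmetry St Prep Meas Tr"
    and inv: "invariant_state St1 Tr chi" and pd: "perf_dist St Prep Meas \<phi>s"
    and chi: "chi = (\<Sum>i<length \<phi>s. p i *\<^sub>R \<phi>s ! i)" and p_sum: "(\<Sum>i<length \<phi>s. p i) = 1"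
    and pd': "perf_dist St Prep Meas \<psi>s" and len: "length \<psi>s = length \<phi>s"
  shows "chi = (1 / real (length \<psi>s)) *\<^sub>R (\<Sum>i<length \<psi>s. \<psi>s ! i)"
proof -
  have chi_uniform: "chi = (\<Sum>i<length \<phi>s. (1 / real (length \<phi>s)) *\<^sub>R \<phi>s ! i)"
    unfolding chi using invariant_state_weights_uniform[OF os ss inv pd chi p_sum] by simp
  obtain V where V: "reversible Tr V" and V_\<phi>: "\<And>i. i < length \<phi>s \<Longrightarrow> V (\<phi>s ! i) = \<psi>s ! i"
    using strong_symmetryE[OF ss len[symmetric] pd pd'] by blast
  have "V chi = chi"
    using inv V unfolding invariant_state_def by blast
  moreover have "V chi = (\<Sum>i<length \<phi>s. (1 / real (length \<phi>s)) *\<^sub>R \<psi>s ! i)"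
    unfolding chi_uniform by (rule linear_image_combination[OF reversible_imp_linear[OF os V] V_\<phi>])
  ultimately show ?thesis
    using len by (simp add: scaleR_sum_right)
qed

theorem mainTheorem15:
  fixes St St1 :: "'v::euclidean_space set"
    and Prep :: "'v list set" and Meas :: "('v \<Rightarrow> real) list set"
    and Tr :: "('v \<Rightarrow> 'v) set" and d :: nat and chi :: 'v and \<psi>s :: "'v list"
  assumes "opt_system St St1 Prep Meas Tr"
    and "classical_decomposability St St1 Prep Meas d"
    and "strong_symmetry St Prep Meas Tr"
    and "has_capacity St Prep Meas d"
    and "invariant_state St1 Tr chi"
    and "length \<psi>s = d" and "perf_dist St Prep Meas \<psi>s" and "set \<psi>s \<subseteq> St1"
  shows "chi = (1 / real d) *\<^sub>R (\<Sum>i<d. \<psi>s ! i)"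
proof -
  have "chi \<in> St1"
    using assms(5) unfolding invariant_state_def by blast
  then obtain \<phi>s p where "length \<phi>s = d" "perf_dist St Prep Meas \<phi>s"
    "(\<Sum>i<d. p i) = 1" "chi = (\<Sum>i<d. p i *\<^sub>R \<phi>s ! i)"
    using assms(2) unfolding classical_decomposability_def by blast
  then show ?thesis
    using invariant_state_eq_uniform_mixture[OF assms(1,3,5)] assms(6,7) by metis
qed

end
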